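(* Let $H$ be the real space of Hermitian matrices on a finite-dimensional system $\tilde V$ with $\langle A,B\rangle=\mathrm{Tr}(AB)$. Let $\mathcal{K}\subset H$ be a proper convex cone (closed, convex, pointed, with nonempty interior) and $\mathcal{F}\subset H$ a compact set such that $\{\lambda Z:0\le\lambda\le1,\ Z\in\mathcal{F}\}$ is convex and $\mathcal{F}\cap\mathrm{int}(\mathcal{K})\neq\emptyset$. Define $R^{\mathcal{F}}_{\mathcal{K}}(\mathcal{E}):=\inf\{\lambda\in\mathbb{R}_+:\ (\mathcal{E}+\lambda\mathcal{E}')/(1+\lambda)\in\mathcal{F},\ \mathcal{E}'\in\mathcal{K}\}$ and $\mathcal{N}:=\{\mathcal{E}\in H:\ \delta Z-\mathcal{E}\notin\mathcal{K}\ \ \forall\delta<1,\ Z\in\mathcal{F}\}$, and let $\mathcal{E}\in\mathcal{N}$. Let $\tilde V'$ be any finite-dimensional system and $\mathcal{L}$ a set of pairs $(\{\hat{\mathcal{J}}_m\}_{m=1}^M,\{\Phi_m\}_{m=1}^M)$, where each $\hat{\mathcal{J}}_m:\mathsf{Her}_{\tilde V}\to\mathsf{Her}_{\tilde V'}$ is linear and $\Phi_1,\dots,\Phi_M\in\mathsf{Her}_{\tilde V'}$. Assume that the cone generated by $\mathcal{X}:=\{\sum_{m=1}^M\hat{\mathcal{J}}_m^\dagger(\Phi_m):(\{\hat{\mathcal{J}}_m\},\{\Phi_m\})\in\mathcal{L}\}$ equals $\mathcal{K}^*$, i.e. $\{\lambda\varphi:\lambda\in\mathbb{R}_+,\varphi\in\mathcal{X}\}=\mathcal{K}^*$.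 Let $\mathcal{L}':=\{(\{\hat{\mathcal{J}}_m\},\{\Phi_m\})\in\mathcal{L}:\sum_m\hat{\mathcal{J}}_m^\dagger(\Phi_m)\neq0\}$. Then $$\max_{(\{\hat{\mathcal{J}}_m\},\{\Phi_m\})\in\mathcal{L}'}\frac{\sum_{m=1}^M\langle\Phi_m,\hat{\mathcal{J}}_m(\mathcal{E})\rangle}{\max_{Z\in\mathcal{F}}\sum_{m=1}^M\langle\Phi_m,\hat{\mathcal{J}}_m(Z)\rangle}=1+R^{\mathcal{F}}_{\mathcal{K}}(\mathcal{E}).$$
   Context: $\mathsf{Her}_X$: Hermitian matrices on $X$ (so $H=\mathsf{Her}_{\tilde V}$). $\hat{\mathcal{J}}_m^\dagger$ is the adjoint defined by $\langle\hat{\mathcal{J}}_m^\dagger(\Phi'),\mathcal{E}'\rangle=\langle\Phi',\hat{\mathcal{J}}_m(\mathcal{E}')\rangle$ for all $\mathcal{E}'\in\mathsf{Her}_{\tilde V}$, $\Phi'\in\mathsf{Her}_{\tilde V'}$. $\mathcal{K}^*:=\{\varphi\in H:\langle\varphi,x\rangle\ge0\ \forall x\in\mathcal{K}\}$; $\mathrm{int}$ denotes interior. *)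

theory Defs
  imports "HOL-Analysis.Analysis"
begin

definition Her :: "(complex^'n^'n) set" where
  "Her = {A. \<forall>i j. A $ i $ j = cnj (A $ j $ i)}"

definition hs_inner :: "complex^'n^'n \<Rightarrow> complex^'n^'n \<Rightarrow> real" where
  "hs_inner A B = Re (trace (A ** B))"

definition her_linear :: "(complex^'n^'n \<Rightarrow> complex^'m^'m) \<Rightarrow> bool" where
  "her_linear J \<longleftrightarrow> (\<forall>X\<in>Her. J X \<in> Her) \<and>
     (\<forall>X\<in>Her. \<forall>Y\<in>Her. \<forall>a b::real. J (a *\<^sub>R X + b *\<^sub>R Y) = a *\<^sub>R J X + b *\<^sub>R J Y)"

definition her_adj :: "(complex^'n^'n \<Rightarrow> complex^'m^'m) \<Rightarrow> complex^'m^'m \<Rightarrow> complex^'n^'n" where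
  "her_adj J Phi = (THE A. A \<in> Her \<and> (\<forall>E\<in>Her. hs_inner A E = hs_inner Phi (J E)))"

definition dual_cone :: "(complex^'n^'n) set \<Rightarrow> (complex^'n^'n) set" where
  "dual_cone K = {phi \<in> Her. \<forall>x\<in>K. hs_inner phi x \<ge> 0}"

definition proper_cone :: "(complex^'n^'n) set \<Rightarrow> bool" where
  "proper_cone K \<longleftrightarrow> K \<subseteq> Her \<and> K \<noteq> {} \<and> cone K \<and> convex K \<and> closed K \<and>
     K \<inter> uminus ` K = {0} \<and> (top_of_set Her) interior_of K \<noteq> {}"

definition robustness :: "(complex^'n^'n) set \<Rightarrow> (complex^'n^'n) set \<Rightarrow> complex^'n^'n \<Rightarrow> real" where
  "robustness F K E = Inf {lam. lam \<ge> 0 \<and>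
     (\<exists>E'\<in>K. (1 / (1 + lam)) *\<^sub>R (E + lam *\<^sub>R E') \<in> F)}"

definition free_set :: "(complex^'n^'n) set \<Rightarrow> (complex^'n^'n) set \<Rightarrow> (complex^'n^'n) set" where
  "free_set F K = {E \<in> Her. \<forall>delta::real. \<forall>Z\<in>F. delta < 1 \<longrightarrow> delta *\<^sub>R Z - E \<notin> K}"

end

theory Submission
  imports Defs
begin

text \<open>
  Let R be the robustness of E and p a nonzero element of the dual cone of K. Every
  decomposition E = (1 + l) Z - l E' with Z \<in> F and E' \<in> K gives p \<bullet> E \<le> (1 + l) p \<bullet> Z, so no
  ratio exceeds 1 + R. Conversely, fix z \<in> F in the interior of K. If a shift of E by an
  interior point of K were of the form \<mu> Z - k with Z \<in> F, k \<in> K and 0 \<le> \<mu> \<le> 1 + R, then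
  perturbing this decomposition along Z would give a mixing weight below R (for \<mu> \<le> 1 it
  would contradict freeness of E). So the ray E + \<epsilon> z, \<epsilon> > 0, is separated from
  (1 + R) [0,1] F - K by a hyperplane, whose normal lies in the dual cone and attains the ratio
  1 + R. As the witnesses generate the dual cone and the ratio is invariant under positive
  scaling, 1 + R is attained on L'. Adjoints exist by the Riesz representation on the real
  subspace of Hermitian matrices.
\<close>

lemma subspace_representation:
  fixes g :: "'a::euclidean_space \<Rightarrow> real"
  assumes S: "subspace S"
    and g: "\<And>x y a b. x \<in> S \<Longrightarrow> y \<in> S \<Longrightarrow> g (a *\<^sub>R x + b *\<^sub>R y) = a * g x + b * g y"
  obtains w where "w \<in> S" "\<And>x. x \<in> S \<Longrightarrow> g x = w \<bullet> x"
proof -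
  obtain B where B: "B \<subseteq> S" "pairwise orthogonal B" "\<And>b. b \<in> B \<Longrightarrow> norm b = 1"
    "independent B" "span B = S"
    using orthonormal_basis_subspace[OF S] by metis
  have fin: "finite B" using B(4) by (rule finiteI_independent)
  have orthonormal: "b \<bullet> b' = (if b = b' then 1 else 0)" if "b \<in> B" "b' \<in> B" for b b'
    using B(2,3) that by (auto simp: pairwise_def orthogonal_def norm_eq_1)
  define w where "w = (\<Sum>b\<in>B. g b *\<^sub>R b)"
  have g_sum: "g (\<Sum>b\<in>C. u b *\<^sub>R b) = (\<Sum>b\<in>C. u b * g b)" if "C \<subseteq> B" for C u
    using finite_subset[OF that fin] that
  proof (induction C rule: finite_induct)
    case empty
    show ?case using g[of 0 0 0 0] subspace_0[OF S] by simp
  next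
    case (insert b C)
    have "(\<Sum>c\<in>C. u c *\<^sub>R c) \<in> S"
      using insert.prems B(1) by (intro subspace_sum[OF S] subspace_scale[OF S]) auto
    then show ?case
      using insert g[of b "\<Sum>c\<in>C. u c *\<^sub>R c" "u b" 1] B(1) by auto
  qed
  show thesis
  proof
    show "w \<in> S" unfolding w_def using B(1) by (intro subspace_sum[OF S] subspace_scale[OF S]) auto
  next
    fix x assume "x \<in> S"
    then obtain u where x: "x = (\<Sum>b\<in>B. u b *\<^sub>R b)"
      using B(5) span_finite[OF fin] by auto
    have "w \<bullet> b = g b" if "b \<in> B" for b
    proof -
      have "w \<bullet> b = (\<Sum>b'\<in>B. if b' = b then g b' else 0)"
        unfolding w_def inner_sum_left using that by (intro sum.cong) (auto simp: orthonormal)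
      then show ?thesis using that fin by simp
    qed
    then have "w \<bullet> x = (\<Sum>b\<in>B. u b * g b)"
      by (simp add: x inner_sum_right)
    with g_sum[of B u] x show "g x = w \<bullet> x" by simp
  qed
qed

lemma separating_hyperplane_subspace:
  fixes C T :: "'a::euclidean_space set"
  assumes S: "subspace S" and "convex C" "convex T" "C \<subseteq> S" "T \<subseteq> S" "C \<noteq> {}" "T \<noteq> {}"
    and disjoint: "C \<inter> T = {}"
  obtains a b where "a \<in> S" "a \<noteq> 0" "\<And>x. x \<in> C \<Longrightarrow> a \<bullet> x \<le> b" "\<And>x. x \<in> T \<Longrightarrow> b \<le> a \<bullet> x"
proof -
  \<comment> \<open>Thickening C by the orthogonal complement forces the normal vector into S.\<close>
  have "convex (C + S\<^sup>\<bottom>)"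
    using \<open>convex C\<close> by (intro convex_set_plus subspace_imp_convex[OF subspace_orthogonal_comp])
  moreover have "C + S\<^sup>\<bottom> \<noteq> {}"
    using \<open>C \<noteq> {}\<close> subspace_0[OF subspace_orthogonal_comp] by blast
  moreover have "(C + S\<^sup>\<bottom>) \<inter> T = {}"
  proof -
    have "c + w \<notin> T" if "c \<in> C" "w \<in> S\<^sup>\<bottom>" for c w
    proof
      assume "c + w \<in> T"
      then have "w \<in> S"
        using that assms subspace_diff[OF S, of "c + w" c] by auto
      then have "w = 0" using orthogonal_Int_0[OF S] \<open>w \<in> S\<^sup>\<bottom>\<close> by blast
      then show False using \<open>c + w \<in> T\<close> \<open>c \<in> C\<close> disjoint by auto
    qed
    then show ?thesis by (auto elim!: set_plus_elim)
  qed
  ultimately obtain a b where a: "a \<noteq> 0" "\<forall>x\<in>C + S\<^sup>\<bottom>. a \<bullet> x \<le> b" "\<forall>x\<in>T. b \<le> a \<bullet> x"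
    using separating_hyperplane_sets[OF _ \<open>convex T\<close> _ \<open>T \<noteq> {}\<close>] by blast
  obtain c where "c \<in> C" using \<open>C \<noteq> {}\<close> by blast
  have "a \<bullet> w = 0" if "w \<in> S\<^sup>\<bottom>" for w
  proof (rule ccontr)
    assume "a \<bullet> w \<noteq> 0"
    define t where "t = (b - a \<bullet> c + 1) / (a \<bullet> w)"
    have "t *\<^sub>R w \<in> S\<^sup>\<bottom>" using that subspace_scale[OF subspace_orthogonal_comp] by blast
    then have "a \<bullet> (c + t *\<^sub>R w) \<le> b" using a(2) \<open>c \<in> C\<close> by blast
    then show False using \<open>a \<bullet> w \<noteq> 0\<close> by (simp add: t_def inner_add_right)
  qed
  then have "a \<in> S\<^sup>\<bottom>\<^sup>\<bottom>"
    by (simp add: orthogonal_comp_def orthogonal_def inner_commute)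
  then have "a \<in> S" using orthogonal_comp_self[OF S] by simp
  moreover have "a \<bullet> x \<le> b" if "x \<in> C" for x
    using a(2) set_plus_intro[OF that subspace_0[OF subspace_orthogonal_comp]] by simp
  ultimately show thesis using that a(1,3) by blast
qed

lemma in_interior_of_subspace_iff:
  fixes K :: "'a::real_normed_vector set"
  assumes S: "subspace S" and "K \<subseteq> S"
  shows "z \<in> top_of_set S interior_of K \<longleftrightarrow> (\<exists>r>0. \<forall>y\<in>S. norm y < r \<longrightarrow> z + y \<in> K)"
proof
  assume "z \<in> top_of_set S interior_of K"
  then obtain U where U: "open U" "z \<in> S \<inter> U" "S \<inter> U \<subseteq> K"
    unfolding interior_of_def openin_open by blast
  then obtain r where "r > 0" "ball z r \<subseteq> U"
    using open_contains_ball by blast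
  moreover have "z + y \<in> S \<inter> ball z r" if "y \<in> S" "norm y < r" for y
    using that U(2) subspace_add[OF S] by (simp add: dist_norm)
  ultimately show "\<exists>r>0. \<forall>y\<in>S. norm y < r \<longrightarrow> z + y \<in> K"
    using U(3) by blast
next
  assume "\<exists>r>0. \<forall>y\<in>S. norm y < r \<longrightarrow> z + y \<in> K"
  then obtain r where r: "r > 0" "\<And>y. y \<in> S \<Longrightarrow> norm y < r \<Longrightarrow> z + y \<in> K"
    by blast
  have "z \<in> S" using r subspace_0[OF S] assms(2) by fastforce
  have "S \<inter> ball z r \<subseteq> K"
  proof
    fix x assume x: "x \<in> S \<inter> ball z r"
    have "x - z \<in> S" using x subspace_diff[OF S] \<open>z \<in> S\<close> by blast
    moreover have "norm (x - z) < r" using x by (simp add: dist_norm norm_minus_commute)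
    ultimately have "z + (x - z) \<in> K" by (rule r(2))
    then show "x \<in> K" by simp
  qed
  moreover have "openin (top_of_set S) (S \<inter> ball z r)" by (simp add: openin_open_Int)
  ultimately show "z \<in> top_of_set S interior_of K"
    unfolding interior_of_def using \<open>z \<in> S\<close> r(1) by auto
qed

lemma Her_entry: "A \<in> Her \<Longrightarrow> A $ i $ j = cnj (A $ j $ i)"
  unfolding Her_def by blast

lemma subspace_Her: "subspace Her"
  unfolding subspace_def
proof (intro conjI ballI allI)
  show "0 \<in> Her" by (simp add: Her_def)
next
  fix x y :: "complex^'n^'n" assume "x \<in> Her" "y \<in> Her"
  then have "(x + y) $ i $ j = cnj ((x + y) $ j $ i)" for i j
    using Her_entry[of x i j] Her_entry[of y i j] by simp
  then show "x + y \<in> Her" unfolding Her_def by blast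
next
  fix c :: real and x :: "complex^'n^'n" assume "x \<in> Her"
  then have "(c *\<^sub>R x) $ i $ j = cnj ((c *\<^sub>R x) $ j $ i)" for i j
    using Her_entry[of x i j] by simp
  then show "c *\<^sub>R x \<in> Her" unfolding Her_def by blast
qed

lemma hs_inner_eq_inner:
  assumes "B \<in> Her" shows "hs_inner A B = A \<bullet> B"
proof -
  have "hs_inner A B = (\<Sum>i\<in>UNIV. \<Sum>k\<in>UNIV. Re (A $ i $ k * B $ k $ i))"
    by (simp add: hs_inner_def trace_def matrix_matrix_mult_def Re_sum)
  also have "\<dots> = (\<Sum>i\<in>UNIV. \<Sum>k\<in>UNIV. A $ i $ k \<bullet> B $ i $ k)"
  proof (intro sum.cong refl)
    fix i k
    have "B $ k $ i = cnj (B $ i $ k)" using assms by (rule Her_entry)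
    then show "Re (A $ i $ k * B $ k $ i) = A $ i $ k \<bullet> B $ i $ k" by (simp add: inner_complex_def)
  qed
  also have "\<dots> = A \<bullet> B" by (simp add: inner_vec_def)
  finally show ?thesis .
qed

lemma her_adj_works:
  fixes J :: "complex^'n^'n \<Rightarrow> complex^'m^'m"
  assumes J: "her_linear J" and Phi: "Phi \<in> Her"
  shows "her_adj J Phi \<in> Her \<and> (\<forall>X\<in>Her. her_adj J Phi \<bullet> X = Phi \<bullet> J X)"
proof -
  have J_Her: "J X \<in> Her" if "X \<in> Her" for X using J that by (simp add: her_linear_def)
  obtain A where A: "A \<in> Her" "\<And>X. X \<in> Her \<Longrightarrow> Phi \<bullet> J X = A \<bullet> X"
    using subspace_representation[OF subspace_Her, of "\<lambda>X. Phi \<bullet> J X"] J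
    by (auto simp: her_linear_def inner_add_right)
  have "\<exists>!A. A \<in> Her \<and> (\<forall>X\<in>Her. hs_inner A X = hs_inner Phi (J X))"
  proof (rule ex1I[of _ A])
    show "A \<in> Her \<and> (\<forall>X\<in>Her. hs_inner A X = hs_inner Phi (J X))"
      using A J_Her by (simp add: hs_inner_eq_inner)
  next
    fix B assume B: "B \<in> Her \<and> (\<forall>X\<in>Her. hs_inner B X = hs_inner Phi (J X))"
    then have "B - A \<in> Her" using A(1) subspace_diff[OF subspace_Her] by blast
    then have "B \<bullet> (B - A) = A \<bullet> (B - A)" using A B J_Her by (simp add: hs_inner_eq_inner)
    then have "(B - A) \<bullet> (B - A) = 0" by (simp add: inner_diff_left)
    then show "B = A" by simp
  qed
  then have "her_adj J Phi \<in> Her \<and> (\<forall>X\<in>Her. hs_inner (her_adj J Phi) X = hs_inner Phi (J X))"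
    unfolding her_adj_def by (rule theI')
  then show ?thesis using J_Her by (simp add: hs_inner_eq_inner)
qed

lemma her_adj_sum:
  assumes "\<forall>m\<in>I. her_linear (J m) \<and> Phi m \<in> Her"
  shows "(\<Sum>m\<in>I. her_adj (J m) (Phi m)) \<in> Her"
    and "X \<in> Her \<Longrightarrow> (\<Sum>m\<in>I. hs_inner (Phi m) (J m X)) = (\<Sum>m\<in>I. her_adj (J m) (Phi m)) \<bullet> X"
proof -
  have adj: "her_adj (J m) (Phi m) \<in> Her \<and> (\<forall>X\<in>Her. her_adj (J m) (Phi m) \<bullet> X = Phi m \<bullet> J m X)"
    if "m \<in> I" for m
    using assms that her_adj_works by blast
  then show "(\<Sum>m\<in>I. her_adj (J m) (Phi m)) \<in> Her"
    by (intro subspace_sum[OF subspace_Her]) blast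
  assume "X \<in> Her"
  then have "hs_inner (Phi m) (J m X) = her_adj (J m) (Phi m) \<bullet> X" if "m \<in> I" for m
    using adj[OF that] assms that by (simp add: hs_inner_eq_inner her_linear_def)
  then show "(\<Sum>m\<in>I. hs_inner (Phi m) (J m X)) = (\<Sum>m\<in>I. her_adj (J m) (Phi m)) \<bullet> X"
    unfolding inner_sum_left by (rule sum.cong[OF refl])
qed

lemma ratio_her_adj_sum:
  assumes "\<forall>m\<in>I. her_linear (J m) \<and> Phi m \<in> Her" "E \<in> Her" "F \<subseteq> Her"
  shows "(\<Sum>m\<in>I. hs_inner (Phi m) (J m E)) / (SUP Z\<in>F. \<Sum>m\<in>I. hs_inner (Phi m) (J m Z))
    = (\<Sum>m\<in>I. her_adj (J m) (Phi m)) \<bullet> E / (SUP Z\<in>F. (\<Sum>m\<in>I. her_adj (J m) (Phi m)) \<bullet> Z)"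
proof -
  have "(SUP Z\<in>F. \<Sum>m\<in>I. hs_inner (Phi m) (J m Z)) = (SUP Z\<in>F. (\<Sum>m\<in>I. her_adj (J m) (Phi m)) \<bullet> Z)"
    using her_adj_sum(2)[OF assms(1)] assms(3) by (intro SUP_cong) auto
  then show ?thesis using her_adj_sum(2)[OF assms(1,2)] by simp
qed

lemma dual_cone_eq: "K \<subseteq> Her \<Longrightarrow> dual_cone K = {p \<in> Her. \<forall>x\<in>K. 0 \<le> p \<bullet> x}"
  unfolding dual_cone_def by (auto simp: subset_iff hs_inner_eq_inner)

definition mixing_weights :: "'a::real_vector set \<Rightarrow> 'a set \<Rightarrow> 'a \<Rightarrow> real set" where
  "mixing_weights F K E = {lam. lam \<ge> 0 \<and> (\<exists>E'\<in>K. (1 / (1 + lam)) *\<^sub>R (E + lam *\<^sub>R E') \<in> F)}"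

lemma robustness_eq_Inf_mixing_weights: "robustness F K E = Inf (mixing_weights F K E)"
  by (simp add: robustness_def mixing_weights_def)

locale robustness_setting =
  fixes S K F :: "'a::euclidean_space set" and E :: 'a
  assumes subspace_S: "subspace S"
    and K_subset: "K \<subseteq> S" and cone_K: "cone K" and convex_K: "convex K"
    and F_subset: "F \<subseteq> S" and compact_F: "compact F"
    and convex_segments_F: "convex {lam *\<^sub>R Z | lam Z. 0 \<le> lam \<and> lam \<le> 1 \<and> Z \<in> F}"
    and F_meets_interior: "F \<inter> (top_of_set S interior_of K) \<noteq> {}"
    and E_in_S: "E \<in> S"
    and E_free: "\<And>\<delta> Z. Z \<in> F \<Longrightarrow> \<delta> < 1 \<Longrightarrow> \<delta> *\<^sub>R Z - E \<notin> K"
begin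

abbreviation "interior_K \<equiv> top_of_set S interior_of K"
abbreviation "R \<equiv> Inf (mixing_weights F K E)"
abbreviation "dual_K \<equiv> {p \<in> S. \<forall>x\<in>K. 0 \<le> p \<bullet> x}"

lemma K_add: "x \<in> K \<Longrightarrow> y \<in> K \<Longrightarrow> x + y \<in> K"
  using convex_cone[of K] cone_K convex_K by blast

lemma K_scale: "x \<in> K \<Longrightarrow> 0 \<le> c \<Longrightarrow> c *\<^sub>R x \<in> K"
  using convex_cone[of K] cone_K convex_K by blast

lemma zero_in_K: "0 \<in> K"
  using F_meets_interior interior_of_subset K_scale[of _ 0] by fastforce

lemma interior_K_iff: "c \<in> interior_K \<longleftrightarrow> (\<exists>r>0. \<forall>y\<in>S. norm y < r \<longrightarrow> c + y \<in> K)"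
  by (rule in_interior_of_subspace_iff[OF subspace_S K_subset])

lemma interior_K_add:
  assumes "c \<in> interior_K" "k \<in> K" shows "c + k \<in> interior_K"
proof -
  obtain r where "r > 0" "\<And>y. y \<in> S \<Longrightarrow> norm y < r \<Longrightarrow> c + y \<in> K"
    using assms(1) interior_K_iff by blast
  then have "\<forall>y\<in>S. norm y < r \<longrightarrow> (c + k) + y \<in> K"
    using K_add[OF _ assms(2)] by (metis add.commute add.left_commute)
  then show ?thesis using \<open>r > 0\<close> interior_K_iff by blast
qed

lemma interior_K_scale:
  assumes "c \<in> interior_K" "0 < t" shows "t *\<^sub>R c \<in> interior_K"
proof -
  obtain r where r: "r > 0" "\<And>y. y \<in> S \<Longrightarrow> norm y < r \<Longrightarrow> c + y \<in> K"
    using assms(1) interior_K_iff by blast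
  have "t *\<^sub>R c + y \<in> K" if "y \<in> S" "norm y < t * r" for y
  proof -
    have "c + (1 / t) *\<^sub>R y \<in> K"
      using that assms(2) by (intro r(2)) (simp_all add: subspace_scale[OF subspace_S] field_simps)
    from K_scale[OF this, of t] show ?thesis using assms(2) by (simp add: scaleR_add_right)
  qed
  then show ?thesis using interior_K_iff r(1) assms(2) by (meson mult_pos_pos)
qed

lemma interior_K_line:
  assumes "c \<in> interior_K" "x \<in> S"
  obtains \<eta> where "\<eta> > 0" "\<And>t. \<bar>t\<bar> \<le> \<eta> \<Longrightarrow> c + t *\<^sub>R x \<in> K"
proof -
  obtain r where r: "r > 0" "\<And>y. y \<in> S \<Longrightarrow> norm y < r \<Longrightarrow> c + y \<in> K"
    using assms(1) interior_K_iff by blast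
  define \<eta> where "\<eta> = r / (norm x + 1)"
  have nx: "0 < norm x + 1" using norm_ge_zero[of x] by linarith
  then have "\<eta> > 0" using r(1) by (simp add: \<eta>_def)
  moreover have "c + t *\<^sub>R x \<in> K" if "\<bar>t\<bar> \<le> \<eta>" for t
  proof (rule r(2))
    show "t *\<^sub>R x \<in> S" using assms(2) subspace_scale[OF subspace_S] by blast
    have "\<bar>t\<bar> * norm x \<le> \<eta> * norm x" using that by (simp add: mult_right_mono)
    also have "\<dots> < r" using r(1) nx by (simp add: \<eta>_def field_simps)
    finally show "norm (t *\<^sub>R x) < r" by simp
  qed
  ultimately show thesis using that by blast
qed

lemma mixing_weightI:
  assumes "1 < \<mu>" "Z \<in> F" "k \<in> K" "E = \<mu> *\<^sub>R Z - k"
  shows "\<mu> - 1 \<in> mixing_weights F K E"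
proof -
  have "(1 / (1 + (\<mu> - 1))) *\<^sub>R (E + (\<mu> - 1) *\<^sub>R ((1 / (\<mu> - 1)) *\<^sub>R k)) = Z"
    using assms(1,4) by simp
  moreover have "(1 / (\<mu> - 1)) *\<^sub>R k \<in> K" using K_scale assms(1,3) by simp
  ultimately show ?thesis using assms(1,2) unfolding mixing_weights_def by force
qed

lemma mixing_weight_below:
  assumes Z: "Z \<in> F" and c: "c \<in> interior_K" and E: "E = \<mu> *\<^sub>R Z - c"
  shows "\<exists>l\<in>mixing_weights F K E. l < \<mu> - 1"
proof -
  obtain \<eta> where \<eta>: "\<eta> > 0" "\<And>t. \<bar>t\<bar> \<le> \<eta> \<Longrightarrow> c + t *\<^sub>R Z \<in> K"
    using interior_K_line[OF c] Z F_subset by blast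
  have shift: "E = (\<mu> - t) *\<^sub>R Z - (c + (- t) *\<^sub>R Z)" for t
    using E by (simp add: algebra_simps)
  show ?thesis
  proof (cases "1 < \<mu>")
    case True
    define t where "t = min \<eta> ((\<mu> - 1) / 2)"
    have "0 < t" "t \<le> \<eta>" using \<eta>(1) True by (auto simp: t_def)
    then have "c + (- t) *\<^sub>R Z \<in> K" using \<eta>(2)[of "- t"] by simp
    moreover have "1 < \<mu> - t"
    proof -
      have "t \<le> (\<mu> - 1) / 2" unfolding t_def by (rule min.cobounded2)
      then show ?thesis using True by (simp add: field_simps)
    qed
    ultimately have "\<mu> - t - 1 \<in> mixing_weights F K E"
      using mixing_weightI Z shift by blast
    then show ?thesis using \<open>0 < t\<close> by force
  next
    case False
    have "(\<mu> - \<eta>) *\<^sub>R Z - E = c + (- \<eta>) *\<^sub>R Z"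
      using E by (simp add: algebra_simps)
    then have "(\<mu> - \<eta>) *\<^sub>R Z - E \<in> K" using \<eta>(1) \<eta>(2)[of "- \<eta>"] by simp
    moreover have "\<mu> - \<eta> < 1" using False \<eta>(1) by simp
    ultimately show ?thesis using E_free Z by blast
  qed
qed

lemma mixing_weights_nonempty: "mixing_weights F K E \<noteq> {}"
proof -
  obtain z where z: "z \<in> F" "z \<in> interior_K" using F_meets_interior by blast
  obtain \<eta> where \<eta>: "\<eta> > 0" "\<And>t. \<bar>t\<bar> \<le> \<eta> \<Longrightarrow> z + t *\<^sub>R E \<in> K"
    using interior_K_line[OF z(2) E_in_S] by blast
  have "(1 / \<eta>) *\<^sub>R (z + (- \<eta>) *\<^sub>R E) \<in> K" using K_scale[OF \<eta>(2)[of "- \<eta>"], of "1 / \<eta>"] \<eta>(1) by simp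
  then have "(1 / \<eta>) *\<^sub>R z + (1 / \<eta>) *\<^sub>R (z + (- \<eta>) *\<^sub>R E) \<in> interior_K"
    using interior_K_add interior_K_scale z(2) \<eta>(1) by simp
  moreover have "E = (2 / \<eta>) *\<^sub>R z - ((1 / \<eta>) *\<^sub>R z + (1 / \<eta>) *\<^sub>R (z + (- \<eta>) *\<^sub>R E))"
    using \<eta>(1) by (simp add: algebra_simps scaleR_add_left[symmetric])
  ultimately show ?thesis using mixing_weight_below[OF z(1)] by blast
qed

lemma R_le: "l \<in> mixing_weights F K E \<Longrightarrow> R \<le> l"
  by (rule cInf_lower) (auto simp: bdd_below_def mixing_weights_def)

lemma R_nonneg: "0 \<le> R"
  using mixing_weights_nonempty by (rule cInf_greatest) (simp add: mixing_weights_def)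

lemma F_nonempty: "F \<noteq> {}"
  using F_meets_interior by blast

lemma bdd_above_inner_F: "bdd_above ((\<lambda>Z. p \<bullet> Z) ` F)"
  by (intro bounded_imp_bdd_above compact_imp_bounded compact_continuous_image compact_F continuous_intros)

lemma dual_pos_on_interior:
  assumes p: "p \<in> dual_K" "p \<noteq> 0" and z: "z \<in> interior_K"
  shows "0 < p \<bullet> z"
proof -
  obtain \<eta> where \<eta>: "\<eta> > 0" "\<And>t. \<bar>t\<bar> \<le> \<eta> \<Longrightarrow> z + t *\<^sub>R p \<in> K"
    using interior_K_line[OF z] p(1) by blast
  have "z + (- \<eta>) *\<^sub>R p \<in> K" using \<eta>(1) \<eta>(2)[of "- \<eta>"] by simp
  then have "0 \<le> p \<bullet> (z + (- \<eta>) *\<^sub>R p)" using p(1) by blast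
  then have "0 \<le> p \<bullet> z - \<eta> * (p \<bullet> p)" by (simp add: inner_diff_right)
  moreover have "0 < \<eta> * (p \<bullet> p)" using \<eta>(1) p(2) by simp
  ultimately show ?thesis by linarith
qed

lemma SUP_dual_pos:
  assumes "p \<in> dual_K" "p \<noteq> 0" shows "0 < (SUP Z\<in>F. p \<bullet> Z)"
proof -
  obtain z where "z \<in> F" "z \<in> interior_K" using F_meets_interior by blast
  then have "0 < p \<bullet> z" "p \<bullet> z \<le> (SUP Z\<in>F. p \<bullet> Z)"
    using dual_pos_on_interior[OF assms] cSUP_upper[OF _ bdd_above_inner_F] by auto
  then show ?thesis by linarith
qed

lemma dual_ratio_le:
  assumes p: "p \<in> dual_K" "p \<noteq> 0"
  shows "p \<bullet> E / (SUP Z\<in>F. p \<bullet> Z) \<le> 1 + R"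
proof -
  let ?h = "SUP Z\<in>F. p \<bullet> Z"
  have "p \<bullet> E / ?h - 1 \<le> l" if l: "l \<in> mixing_weights F K E" for l
  proof -
    obtain E' where E': "E' \<in> K" "(1 / (1 + l)) *\<^sub>R (E + l *\<^sub>R E') \<in> F" and "l \<ge> 0"
      using l unfolding mixing_weights_def by blast
    define Z where "Z = (1 / (1 + l)) *\<^sub>R (E + l *\<^sub>R E')"
    have "E = (1 + l) *\<^sub>R Z - l *\<^sub>R E'" using \<open>l \<ge> 0\<close> by (simp add: Z_def)
    then have "p \<bullet> E = (1 + l) * (p \<bullet> Z) - l * (p \<bullet> E')" by (simp add: inner_diff_right)
    also have "\<dots> \<le> (1 + l) * (p \<bullet> Z)" using p(1) E'(1) \<open>l \<ge> 0\<close> by simp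
    also have "\<dots> \<le> (1 + l) * ?h"
      using cSUP_upper[OF E'(2)[folded Z_def] bdd_above_inner_F] \<open>l \<ge> 0\<close>
      by (intro mult_left_mono) simp_all
    finally show ?thesis using SUP_dual_pos[OF p] by (simp add: field_simps)
  qed
  then have "p \<bullet> E / ?h - 1 \<le> R"
    using mixing_weights_nonempty by (intro cInf_greatest) auto
  then show ?thesis by simp
qed

definition dominated :: "'a set" where
  "dominated = {((1 + R) * t) *\<^sub>R Z - k | t Z k. 0 \<le> t \<and> t \<le> 1 \<and> Z \<in> F \<and> k \<in> K}"

lemma dominatedI: "0 \<le> t \<Longrightarrow> t \<le> 1 \<Longrightarrow> Z \<in> F \<Longrightarrow> k \<in> K \<Longrightarrow> ((1 + R) * t) *\<^sub>R Z - k \<in> dominated"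
  unfolding dominated_def by blast

lemma dominated_subset: "dominated \<subseteq> S"
  unfolding dominated_def using F_subset K_subset
  by (auto intro!: subspace_diff[OF subspace_S] subspace_scale[OF subspace_S])

lemma convex_dominated: "convex dominated"
proof -
  have "dominated = (\<lambda>x. (1 + R) *\<^sub>R x) ` {lam *\<^sub>R Z | lam Z. 0 \<le> lam \<and> lam \<le> 1 \<and> Z \<in> F} + uminus ` K"
    unfolding dominated_def set_plus_def by force
  then show ?thesis
    using convex_segments_F convex_K by (simp add: convex_set_plus convex_scaling convex_negations)
qed

lemma shift_notin_dominated:
  assumes c: "c \<in> interior_K" shows "E + c \<notin> dominated"
proof
  assume "E + c \<in> dominated"
  then obtain t Z k where tZk: "0 \<le> t" "t \<le> 1" "Z \<in> F" "k \<in> K" "E + c = ((1 + R) * t) *\<^sub>R Z - k"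
    unfolding dominated_def by blast
  then have "E = ((1 + R) * t) *\<^sub>R Z - (c + k)" by (simp add: algebra_simps)
  then obtain l where "l \<in> mixing_weights F K E" "l < (1 + R) * t - 1"
    using mixing_weight_below[OF tZk(3) interior_K_add[OF c tZk(4)]] by blast
  moreover have "(1 + R) * t \<le> 1 + R" using R_nonneg tZk(1,2) by (simp add: mult_left_le)
  ultimately show False using R_le by fastforce
qed

lemma separate_dominated_from_E:
  obtains a b where "a \<in> S" "a \<noteq> 0" "\<And>x. x \<in> dominated \<Longrightarrow> a \<bullet> x \<le> b" "b \<le> a \<bullet> E"
proof -
  obtain z where z: "z \<in> F" "z \<in> interior_K" using F_meets_interior by blast
  define T where "T = (\<lambda>\<epsilon>. E + \<epsilon> *\<^sub>R z) ` {0<..}"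
  have "convex T"
    using convex_translation[OF convex_scaled[OF convex_real_interval(3)], of E z 0]
    by (simp add: T_def image_image)
  have "T \<subseteq> S"
    using E_in_S z(1) F_subset
    by (auto simp: T_def intro!: subspace_add[OF subspace_S] subspace_scale[OF subspace_S])
  have "E + 1 *\<^sub>R z \<in> T" unfolding T_def by (rule imageI) simp
  have "0 \<in> dominated" using dominatedI[of 0 z 0] z(1) zero_in_K by simp
  have "dominated \<inter> T = {}"
    using shift_notin_dominated interior_K_scale[OF z(2)] by (auto simp: T_def)
  then obtain a b where a: "a \<in> S" "a \<noteq> 0" "\<And>x. x \<in> dominated \<Longrightarrow> a \<bullet> x \<le> b"
      and T: "\<And>x. x \<in> T \<Longrightarrow> b \<le> a \<bullet> x"
    using separating_hyperplane_subspace[OF subspace_S convex_dominated \<open>convex T\<close> dominated_subset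
        \<open>T \<subseteq> S\<close>] \<open>0 \<in> dominated\<close> \<open>E + 1 *\<^sub>R z \<in> T\<close> by blast
  have "b \<le> a \<bullet> E"
  proof (rule field_le_epsilon)
    fix e :: real assume "0 < e"
    define \<epsilon> where "\<epsilon> = e / (\<bar>a \<bullet> z\<bar> + 1)"
    have "0 < \<epsilon>" using \<open>0 < e\<close> by (simp add: \<epsilon>_def add_nonneg_pos)
    then have "E + \<epsilon> *\<^sub>R z \<in> T" unfolding T_def by (intro imageI) simp
    then have "b \<le> a \<bullet> E + \<epsilon> * (a \<bullet> z)" using T[of "E + \<epsilon> *\<^sub>R z"] by (simp add: inner_add_right)
    also have "\<epsilon> * (a \<bullet> z) \<le> \<epsilon> * (\<bar>a \<bullet> z\<bar> + 1)" using \<open>0 < \<epsilon>\<close> by (intro mult_left_mono) auto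
    also have "\<dots> = e" by (simp add: \<epsilon>_def add_nonneg_pos)
    finally show "b \<le> a \<bullet> E + e" by simp
  qed
  with a show thesis using that by blast
qed

lemma exists_dual_attaining:
  obtains a where "a \<in> dual_K" "a \<noteq> 0" "\<And>Z. Z \<in> F \<Longrightarrow> (1 + R) * (a \<bullet> Z) \<le> a \<bullet> E"
proof -
  obtain a b where a: "a \<in> S" "a \<noteq> 0" "\<And>x. x \<in> dominated \<Longrightarrow> a \<bullet> x \<le> b" and "b \<le> a \<bullet> E"
    using separate_dominated_from_E by blast
  obtain z where z: "z \<in> F" using F_nonempty by blast
  have dominated_neg_K: "- k \<in> dominated" if "k \<in> K" for k
    using dominatedI[of 0 z k] z(1) that by simp
  have "0 \<le> a \<bullet> k" if "k \<in> K" for k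
  proof (rule ccontr)
    assume "\<not> 0 \<le> a \<bullet> k"
    define \<tau> where "\<tau> = (\<bar>b\<bar> + 1) / - (a \<bullet> k)"
    have "0 \<le> \<tau>" unfolding \<tau>_def using \<open>\<not> 0 \<le> a \<bullet> k\<close> by (intro divide_nonneg_pos) auto
    then have "a \<bullet> (- (\<tau> *\<^sub>R k)) \<le> b" using a(3) dominated_neg_K K_scale that by blast
    moreover have "a \<bullet> (- (\<tau> *\<^sub>R k)) = \<bar>b\<bar> + 1" using \<open>\<not> 0 \<le> a \<bullet> k\<close> by (simp add: \<tau>_def)
    ultimately show False by simp
  qed
  moreover have "(1 + R) * (a \<bullet> Z) \<le> a \<bullet> E" if "Z \<in> F" for Z
    using a(3)[OF dominatedI[of 1 Z 0]] dominated_neg_K \<open>b \<le> a \<bullet> E\<close> that zero_in_K by simp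
  ultimately show thesis using that a(1,2) by blast
qed

lemma dual_ratio_eq:
  assumes p: "p \<in> dual_K" "p \<noteq> 0" and attains: "\<And>Z. Z \<in> F \<Longrightarrow> (1 + R) * (p \<bullet> Z) \<le> p \<bullet> E"
  shows "p \<bullet> E / (SUP Z\<in>F. p \<bullet> Z) = 1 + R"
proof -
  have "0 < 1 + R" using R_nonneg by simp
  then have "(SUP Z\<in>F. p \<bullet> Z) \<le> p \<bullet> E / (1 + R)"
    using attains by (intro cSUP_least[OF F_nonempty]) (simp add: pos_le_divide_eq mult.commute)
  then have "1 + R \<le> p \<bullet> E / (SUP Z\<in>F. p \<bullet> Z)"
    using \<open>0 < 1 + R\<close> SUP_dual_pos[OF p] by (simp add: pos_le_divide_eq mult.commute)
  with dual_ratio_le[OF p] show ?thesis by simp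
qed

theorem dual_generators_ratio_max:
  fixes \<phi> :: "'b \<Rightarrow> 'a"
  assumes gen: "{lam *\<^sub>R \<phi> x | lam x. 0 \<le> lam \<and> x \<in> X} = dual_K"
  shows "\<exists>x\<in>X. \<phi> x \<noteq> 0 \<and> \<phi> x \<bullet> E / (SUP Z\<in>F. \<phi> x \<bullet> Z) = 1 + R"
    and "\<forall>x\<in>X. \<phi> x \<noteq> 0 \<longrightarrow> \<phi> x \<bullet> E / (SUP Z\<in>F. \<phi> x \<bullet> Z) \<le> 1 + R"
proof -
  have dual: "\<phi> x \<in> dual_K" if "x \<in> X" for x
  proof -
    have "\<phi> x \<in> {lam *\<^sub>R \<phi> x | lam x. 0 \<le> lam \<and> x \<in> X}"
      using that by (intro CollectI exI[of _ 1] exI[of _ x]) simp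
    then show ?thesis unfolding gen by simp
  qed
  then show "\<forall>x\<in>X. \<phi> x \<noteq> 0 \<longrightarrow> \<phi> x \<bullet> E / (SUP Z\<in>F. \<phi> x \<bullet> Z) \<le> 1 + R"
    using dual_ratio_le by blast
  obtain a where a: "a \<in> dual_K" "a \<noteq> 0" "\<And>Z. Z \<in> F \<Longrightarrow> (1 + R) * (a \<bullet> Z) \<le> a \<bullet> E"
    using exists_dual_attaining by blast
  obtain lam x where "a = lam *\<^sub>R \<phi> x" "0 \<le> lam" "x \<in> X"
    using a(1)[folded gen] by blast
  with a(2) have x: "a = lam *\<^sub>R \<phi> x" "0 < lam" "x \<in> X" "\<phi> x \<noteq> 0"
    by auto
  have "(1 + R) * (\<phi> x \<bullet> Z) \<le> \<phi> x \<bullet> E" if "Z \<in> F" for Z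
  proof -
    have "lam * ((1 + R) * (\<phi> x \<bullet> Z)) \<le> lam * (\<phi> x \<bullet> E)"
      using a(3)[OF that] x(1) by (simp add: mult.left_commute)
    then show ?thesis using x(2) by (simp add: mult_le_cancel_left_pos)
  qed
  then show "\<exists>x\<in>X. \<phi> x \<noteq> 0 \<and> \<phi> x \<bullet> E / (SUP Z\<in>F. \<phi> x \<bullet> Z) = 1 + R"
    using dual_ratio_eq[OF dual[OF x(3)] x(4)] x(3,4) by blast
qed

end

theorem proposition3:
  fixes K F :: "(complex^'n^'n) set"
    and E :: "complex^'n^'n"
    and M :: nat
    and L :: "((nat \<Rightarrow> complex^'n^'n \<Rightarrow> complex^'m^'m) \<times> (nat \<Rightarrow> complex^'m^'m)) set"
  assumes K: "proper_cone K"
    and F_sub: "F \<subseteq> Her"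
    and F_compact: "compact F"
    and F_conv: "convex {lam *\<^sub>R Z | lam Z. 0 \<le> lam \<and> lam \<le> 1 \<and> Z \<in> F}"
    and F_int: "F \<inter> ((top_of_set Her) interior_of K) \<noteq> {}"
    and E: "E \<in> free_set F K"
    and L: "\<forall>(J, Phi)\<in>L. \<forall>m\<in>{1..M}. her_linear (J m) \<and> Phi m \<in> Her"
    and gen: "{lam *\<^sub>R phi | lam phi. lam \<ge> 0 \<and>
                 phi \<in> {(\<Sum>m=1..M. her_adj (J m) (Phi m)) | J Phi. (J, Phi) \<in> L}}
              = dual_cone K"
  defines "L' \<equiv> {(J, Phi) \<in> L. (\<Sum>m=1..M. her_adj (J m) (Phi m)) \<noteq> 0}"
    and "ratio \<equiv> (\<lambda>(J, Phi). (\<Sum>m=1..M. hs_inner (Phi m) (J m E)) /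
                     (SUP Z\<in>F. (\<Sum>m=1..M. hs_inner (Phi m) (J m Z))))"
  shows "(\<exists>p\<in>L'. ratio p = 1 + robustness F K E) \<and> (\<forall>p\<in>L'. ratio p \<le> 1 + robustness F K E)"
proof -
  interpret robustness_setting Her K F E
    using K F_sub F_compact F_conv F_int E
    by unfold_locales (auto simp: proper_cone_def free_set_def subspace_Her)
  define adj :: "(nat \<Rightarrow> complex^'n^'n \<Rightarrow> complex^'m^'m) \<times> (nat \<Rightarrow> complex^'m^'m) \<Rightarrow> complex^'n^'n"
    where "adj = (\<lambda>(J, Phi). \<Sum>m=1..M. her_adj (J m) (Phi m))"
  have ratio: "ratio p = adj p \<bullet> E / (SUP Z\<in>F. adj p \<bullet> Z)" if "p \<in> L" for p
  proof (cases p)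
    case (Pair J Phi)
    then have "\<forall>m\<in>{1..M}. her_linear (J m) \<and> Phi m \<in> Her" using bspec[OF L that] by simp
    then show ?thesis using ratio_her_adj_sum[OF _ E_in_S F_sub] Pair by (simp add: ratio_def adj_def)
  qed
  have "{(\<Sum>m=1..M. her_adj (J m) (Phi m)) | J Phi. (J, Phi) \<in> L} = adj ` L"
    by (force simp: adj_def)
  then have "dual_K = {lam *\<^sub>R phi | lam phi. 0 \<le> lam \<and> phi \<in> adj ` L}"
    using gen dual_cone_eq[OF K_subset] by simp
  then have "{lam *\<^sub>R adj p | lam p. 0 \<le> lam \<and> p \<in> L} = dual_K" by blast
  then have attained: "\<exists>p\<in>L. adj p \<noteq> 0 \<and> adj p \<bullet> E / (SUP Z\<in>F. adj p \<bullet> Z) = 1 + R"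
    and bounded: "\<forall>p\<in>L. adj p \<noteq> 0 \<longrightarrow> adj p \<bullet> E / (SUP Z\<in>F. adj p \<bullet> Z) \<le> 1 + R"
    by (rule dual_generators_ratio_max)+
  have L': "L' = {p \<in> L. adj p \<noteq> 0}"
    by (auto simp: L'_def adj_def)
  from attained obtain p where "p \<in> L'" "ratio p = 1 + R"
    using ratio unfolding L' by fastforce
  moreover have "\<forall>p\<in>L'. ratio p \<le> 1 + R"
    using bounded ratio unfolding L' by simp
  ultimately show ?thesis unfolding robustness_eq_Inf_mixing_weights by blast
qed

end
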